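(* Let $D \subset \mathbb{N}$ be finite and let $G_n$ be the circulant graph on $n$ vertices with set of distances $D$. Then \[ \lim_{n \to \infty} \frac{\alpha(G_n)}{n} = \sup_{n} \frac{\alpha(G_n)}{n}. \]
   Context: $\mathbb{N} = \{1,2,\ldots\}$. $G_n$ has vertex set $\{0, \ldots, n-1\}$, and vertices $u, v$ (possibly equal) are adjacent iff there is $d \in D$ with $u - v \equiv d \pmod n$ or $v - u \equiv d \pmod n$ (loops may occur when $n \leq \max D$). $\alpha(G)$ is the maximum size of an independent set, which contains no two adjacent vertices and no vertex with a loop. *)

theory Defs
  imports "HOL-Analysis.Analysis"
begin

definition circ_adj :: "nat set \<Rightarrow> nat \<Rightarrow> nat \<Rightarrow> nat \<Rightarrow> bool" where
  "circ_adj D n u v \<longleftrightarrow>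
     (\<exists>d\<in>D. (int u - int v) mod int n = int d mod int n
           \<or> (int v - int u) mod int n = int d mod int n)"

definition circ_independent :: "nat set \<Rightarrow> nat \<Rightarrow> nat set \<Rightarrow> bool" where
  "circ_independent D n S \<longleftrightarrow>
     S \<subseteq> {0..<n} \<and> (\<forall>u\<in>S. \<forall>v\<in>S. \<not> circ_adj D n u v)"

definition circ_alpha :: "nat set \<Rightarrow> nat \<Rightarrow> nat" where
  "circ_alpha D n = Max (card ` {S. circ_independent D n S})"

end

theory Submission
  imports Defs
begin

text \<open>Let \<open>m \<ge> max D\<close> and \<open>N > m\<close>. Two vertices of \<open>G\<^sub>N\<close> below \<open>N - m\<close> can only be adjacent
through their true integer difference, never by wrapping around modulo \<open>N\<close>. Hence a maximum
independent set of \<open>G\<^sub>n\<close>, repeated periodically on \<open>{0..<N - m}\<close>, is independent in \<open>G\<^sub>N\<close>, which gives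
\<open>\<alpha>(G\<^sub>N)/N \<ge> \<alpha>(G\<^sub>n)/n - (m + n)/N\<close>. Letting \<open>N \<rightarrow> \<infinity>\<close> for fixed \<open>n\<close>, as in Fekete's lemma, the
lower limit of \<open>\<alpha>(G\<^sub>N)/N\<close> is at least every \<open>\<alpha>(G\<^sub>n)/n\<close>, hence equals the supremum.\<close>

lemma finite_circ_independent_sets: "finite {S. circ_independent D n S}"
proof (rule finite_subset)
  show "{S. circ_independent D n S} \<subseteq> Pow {0..<n}"
    unfolding circ_independent_def by auto
qed simp

lemma circ_independent_empty: "circ_independent D n {}"
  unfolding circ_independent_def by simp

lemma card_le_circ_alpha: "circ_independent D n S \<Longrightarrow> card S \<le> circ_alpha D n"
  unfolding circ_alpha_def by (rule Max_ge) (use finite_circ_independent_sets in auto)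

lemma circ_alpha_attained: obtains S where "circ_independent D n S" "card S = circ_alpha D n"
proof -
  have "circ_alpha D n \<in> card ` {S. circ_independent D n S}"
    unfolding circ_alpha_def
    using finite_circ_independent_sets circ_independent_empty[of D n] by (intro Max_in) auto
  then show ?thesis using that by force
qed

lemma circ_alpha_le: "circ_alpha D n \<le> n"
proof -
  obtain S where "circ_independent D n S" "card S = circ_alpha D n"
    by (rule circ_alpha_attained)
  moreover from this have "card S \<le> card {0..<n}"
    unfolding circ_independent_def by (intro card_mono) auto
  ultimately show ?thesis by simp
qed

lemma int_mod_eq_imp_eq_bounded:
  fixes x d N m :: int
  assumes "x mod N = d mod N" "\<bar>x\<bar> < N - m" "0 \<le> d" "d \<le> m"
  shows "x = d"
proof (rule ccontr)
  assume "x \<noteq> d"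
  moreover have "N dvd x - d" using assms(1) by (simp add: mod_eq_dvd_iff)
  ultimately have "\<bar>N\<bar> \<le> \<bar>x - d\<bar>" by (intro dvd_imp_le_int) auto
  with assms(2-4) show False by linarith
qed

lemma circ_adj_imp_diff_in:
  assumes "circ_adj D N x y" "\<forall>d\<in>D. d \<le> m" "x < N - m" "y < N - m"
  shows "\<exists>d\<in>D. int x - int y = int d \<or> int y - int x = int d"
proof -
  obtain d where "d \<in> D" and
    "(int x - int y) mod int N = int d mod int N \<or> (int y - int x) mod int N = int d mod int N"
    using assms(1) unfolding circ_adj_def by blast
  moreover have "\<bar>int x - int y\<bar> < int N - int m" "\<bar>int y - int x\<bar> < int N - int m"
    using assms(3,4) by linarith+
  ultimately show ?thesis
    using assms(2) int_mod_eq_imp_eq_bounded[of _ "int N" "int d" "int m"] by force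
qed

lemma circ_adj_mod_of_diff:
  assumes "d \<in> D" "int x - int y = int d"
  shows "circ_adj D n (x mod n) (y mod n)"
proof -
  have "(int (x mod n) - int (y mod n)) mod int n = int d mod int n"
    using assms(2) by (simp only: of_nat_mod mod_diff_eq)
  then show ?thesis unfolding circ_adj_def using assms(1) by blast
qed

lemma circ_independent_periodic:
  assumes indep: "circ_independent D n S" and "\<forall>d\<in>D. d \<le> m"
  shows "circ_independent D N {x. x < N - m \<and> x mod n \<in> S}"
  unfolding circ_independent_def
proof safe
  fix x y
  assume x: "x < N - m" "x mod n \<in> S" and y: "y < N - m" "y mod n \<in> S"
    and "circ_adj D N x y"
  then obtain d where "d \<in> D" "int x - int y = int d \<or> int y - int x = int d"
    using circ_adj_imp_diff_in assms(2) by blast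
  then have "circ_adj D n (x mod n) (y mod n) \<or> circ_adj D n (y mod n) (x mod n)"
    using circ_adj_mod_of_diff by blast
  with indep x y show False unfolding circ_independent_def by blast
qed auto

lemma card_periodic_set_ge:
  assumes "S \<subseteq> {0..<n}"
  shows "(L div n) * card S \<le> card {x. x < L \<and> x mod n \<in> S}"
proof -
  let ?f = "\<lambda>(q, s). q * n + s"
  have inj: "inj_on ?f ({..<L div n} \<times> S)"
  proof (rule inj_onI, clarify)
    fix q s q' s'
    assume "s \<in> S" "s' \<in> S" and eq: "q * n + s = q' * n + s'"
    then have "s < n" "s' < n" using assms by auto
    then have "s = s'" using arg_cong[OF eq, of "\<lambda>x. x mod n"] by simp
    with eq \<open>s < n\<close> show "q = q' \<and> s = s'" by simp
  qed
  have sub: "?f ` ({..<L div n} \<times> S) \<subseteq> {x. x < L \<and> x mod n \<in> S}"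
  proof clarify
    fix q s assume "q < L div n" "s \<in> S"
    then have "s < n" using assms by auto
    have "q * n + s < Suc q * n" using \<open>s < n\<close> by (simp only: mult_Suc)
    also have "\<dots> \<le> L div n * n" using \<open>q < L div n\<close> by (intro mult_le_mono1) (simp only: Suc_le_eq)
    also have "\<dots> \<le> L" by simp
    finally have "q * n + s < L" .
    with \<open>s < n\<close> \<open>s \<in> S\<close> show "q * n + s < L \<and> (q * n + s) mod n \<in> S" by simp
  qed
  have "(L div n) * card S = card ({..<L div n} \<times> S)"
    by (simp add: card_cartesian_product)
  also have "\<dots> = card (?f ` ({..<L div n} \<times> S))"
    by (rule card_image[OF inj, symmetric])
  also have "\<dots> \<le> card {x. x < L \<and> x mod n \<in> S}"
    by (rule card_mono[OF _ sub]) simp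
  finally show ?thesis .
qed

lemma circ_alpha_periodic_lower_bound:
  assumes "\<forall>d\<in>D. d \<le> m"
  shows "((N - m) div n) * circ_alpha D n \<le> circ_alpha D N"
proof -
  obtain S where S: "circ_independent D n S" "card S = circ_alpha D n"
    by (rule circ_alpha_attained)
  then have "S \<subseteq> {0..<n}" unfolding circ_independent_def by blast
  then have "((N - m) div n) * circ_alpha D n \<le> card {x. x < N - m \<and> x mod n \<in> S}"
    using card_periodic_set_ge S(2) by metis
  also have "\<dots> \<le> circ_alpha D N"
    using circ_independent_periodic[OF S(1) assms] by (rule card_le_circ_alpha)
  finally show ?thesis .
qed

lemma circ_alpha_cross_bound:
  assumes "\<forall>d\<in>D. d \<le> m" "0 < n" "m < N"
  shows "N * circ_alpha D n \<le> n * circ_alpha D N + (m + n) * n"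
proof -
  define k where "k = (N - m) div n"
  have "N \<le> k * n + m + n"
    unfolding k_def using assms(2,3) div_mult_mod_eq[of "N - m" n] mod_less_divisor[of n "N - m"]
    by linarith
  then have "N * circ_alpha D n \<le> n * (k * circ_alpha D n) + (m + n) * circ_alpha D n"
    by (metis add.assoc add_mult_distrib mult.assoc mult.commute mult_le_mono1)
  also have "\<dots> \<le> n * circ_alpha D N + (m + n) * n"
    unfolding k_def using circ_alpha_periodic_lower_bound[OF assms(1)] circ_alpha_le
    by (intro add_mono mult_le_mono) auto
  finally show ?thesis .
qed

lemma circ_alpha_ratio_lower_bound:
  assumes "\<forall>d\<in>D. d \<le> m" "0 < n" "m < N"
  shows "real (circ_alpha D n) / n - (real m + n) / N \<le> real (circ_alpha D N) / N"
proof -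
  have "real N * circ_alpha D n \<le> n * circ_alpha D N + (real m + n) * n"
    using circ_alpha_cross_bound[OF assms] by (metis of_nat_add of_nat_le_iff of_nat_mult)
  then have "real (circ_alpha D n) / n \<le> real (circ_alpha D N) / N + (real m + n) / N"
    using assms(2,3) by (simp add: field_simps)
  then show ?thesis by simp
qed

lemma LIMSEQ_SUP_of_eventual_lower_bounds:
  fixes f :: "nat \<Rightarrow> real" and e :: "nat \<Rightarrow> nat \<Rightarrow> real"
  assumes bdd: "bdd_above (f ` {1..})"
    and e: "\<And>n. (e n \<longlongrightarrow> 0) sequentially"
    and lower: "\<And>n. n \<ge> 1 \<Longrightarrow> eventually (\<lambda>N. f n - e n N \<le> f N) sequentially"
  shows "f \<longlonglongrightarrow> (SUP n\<in>{1..}. f n)"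
proof (rule order_tendstoI)
  fix a assume "a < (SUP n\<in>{1..}. f n)"
  then obtain n where n: "n \<ge> 1" "a < f n"
    using less_cSUP_iff[OF _ bdd] by fastforce
  have "eventually (\<lambda>N. e n N < f n - a) sequentially"
    using e n(2) by (intro order_tendstoD) auto
  with lower[OF n(1)] show "eventually (\<lambda>N. a < f N) sequentially"
    by eventually_elim linarith
next
  fix a assume "(SUP n\<in>{1..}. f n) < a"
  moreover have "eventually (\<lambda>N. f N \<le> (SUP n\<in>{1..}. f n)) sequentially"
    using eventually_ge_at_top[of 1] by eventually_elim (rule cSUP_upper[OF _ bdd], simp)
  ultimately show "eventually (\<lambda>N. f N < a) sequentially"
    by (auto elim: eventually_mono)
qed

theorem theorem1:
  fixes D :: "nat set"
  assumes "finite D" and "0 \<notin> D"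
  shows "(\<lambda>n. real (circ_alpha D n) / real n) \<longlonglongrightarrow>
           (SUP n\<in>{1..}. real (circ_alpha D n) / real n)"
proof (rule LIMSEQ_SUP_of_eventual_lower_bounds)
  define m where "m = Max (insert 0 D)"
  have m: "\<forall>d\<in>D. d \<le> m" unfolding m_def using assms(1) by auto
  show "bdd_above ((\<lambda>n. real (circ_alpha D n) / real n) ` {1..})"
    using circ_alpha_le by (intro bdd_aboveI[of _ 1]) (auto simp: divide_le_eq_1)
  show "((\<lambda>N. (real m + real n) / real N) \<longlongrightarrow> 0) sequentially" for n
    by (rule lim_const_over_n)
  show "eventually (\<lambda>N. real (circ_alpha D n) / real n - (real m + real n) / real N
          \<le> real (circ_alpha D N) / real N) sequentially" if "n \<ge> 1" for n
    using eventually_gt_at_top[of m]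
    by eventually_elim (use that in \<open>auto intro: circ_alpha_ratio_lower_bound[OF m]\<close>)
qed

end
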